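(* Let $i,j\in[s]$. If $\varphi$ is a homomorphism from $F_i^{\bullet\bullet}$ to $F_j^{\bullet\bullet}$ (both viewed as ordinary digraphs), then $\varphi(z_i),\varphi(w_i)\in\{z_j,w_j\}$.
   Context: All digraphs are finite and loopless; a tournament is a digraph in which every pair of distinct vertices is joined by exactly one arc. A homomorphism from a digraph $F$ to a digraph $H$ is a map $\varphi:V(F)\to V(H)$ with $(\varphi(u),\varphi(v))\in E(H)$ whenever $(u,v)\in E(F)$. Construction of $F_i^{\bullet\bullet}$: fix $s\in\mathbb{N}^+$, a positive integer $m$, and a tournament $F_0$ on vertex set $[m]$ satisfying: (I) every vertex has out-degree and in-degree at most $2m/3$; (II) there are no disjoint $A_1,A_2\subseteq[m]$ with $|A_1|=|A_2|=\lceil\sqrt m\,\rceil$ such that $(a_1,a_2)$ is an arc for all $a_1\in A_1,a_2\in A_2$; (III) for every $S\subseteq[m]$ with $|S|\ge 2m/13-\sqrt m$, $F_0[S]$ contains a directed cycle. Let $k_1,\dots,k_s$ be integers in the open interval $(2m/3+2,\,5m/6)$ with $k_i>k_{i+1}+1$ for $1\le i<s$. For $i\in[s]$, $F_i^{\bullet\bullet}$ is the digraph on vertex set $[m]\cup\{z_i,w_i\}$ ($z_i,w_i$ two new vertices, called roots) whose arcs are all arcs of $F_0$, together with the arcs $z_i\to v$ and $v\to w_i$ for every $1\le v\le k_i$, and the arcs $u\to z_i$ and $w_i\to u$ for every $k_i<u\le m$. There is no arc between $z_i$ and $w_i$. *)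

theory Defs
  imports Complex_Main
begin

text \<open>Vertices of the rooted digraphs: the vertices 1..m of F_0 (Orig v),
  and the two roots (Zr = z_i, Wr = w_i).  Each F_i^{bullet bullet} is a separate
  digraph, so its roots are named Zr/Wr within that digraph.\<close>
datatype vtx = Orig nat | Zr | Wr

definition is_tournament :: "nat set \<Rightarrow> (nat \<times> nat) set \<Rightarrow> bool" where
  "is_tournament V E \<longleftrightarrow> E \<subseteq> V \<times> V \<and> (\<forall>v. (v, v) \<notin> E) \<and>
     (\<forall>u\<in>V. \<forall>v\<in>V. u \<noteq> v \<longrightarrow> ((u, v) \<in> E \<longleftrightarrow> (v, u) \<notin> E))"

definition out_deg :: "(nat \<times> nat) set \<Rightarrow> nat \<Rightarrow> nat" where
  "out_deg E u = card {v. (u, v) \<in> E}"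

definition in_deg :: "(nat \<times> nat) set \<Rightarrow> nat \<Rightarrow> nat" where
  "in_deg E u = card {v. (v, u) \<in> E}"

definition has_dicycle_in :: "(nat \<times> nat) set \<Rightarrow> nat set \<Rightarrow> bool" where
  "has_dicycle_in E S \<longleftrightarrow> (\<exists>cs. distinct cs \<and> length cs \<ge> 2 \<and> set cs \<subseteq> S \<and>
     (\<forall>t < length cs - 1. (cs ! t, cs ! Suc t) \<in> E) \<and> (last cs, hd cs) \<in> E)"

definition Fdd_verts :: "nat \<Rightarrow> vtx set" where
  "Fdd_verts m = Orig ` {1..m} \<union> {Zr, Wr}"

definition Fdd_arcs :: "(nat \<times> nat) set \<Rightarrow> nat \<Rightarrow> nat \<Rightarrow> (vtx \<times> vtx) set" where
  "Fdd_arcs E0 m k =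
     {(Orig u, Orig v) | u v. (u, v) \<in> E0}
   \<union> {(Zr, Orig v) | v. 1 \<le> v \<and> v \<le> k}
   \<union> {(Orig v, Wr) | v. 1 \<le> v \<and> v \<le> k}
   \<union> {(Orig u, Zr) | u. k < u \<and> u \<le> m}
   \<union> {(Wr, Orig u) | u. k < u \<and> u \<le> m}"

definition is_hom :: "'a set \<Rightarrow> ('a \<times> 'a) set \<Rightarrow> 'b set \<Rightarrow> ('b \<times> 'b) set \<Rightarrow> ('a \<Rightarrow> 'b) \<Rightarrow> bool" where
  "is_hom VF EF VH EH \<phi> \<longleftrightarrow> (\<forall>x\<in>VF. \<phi> x \<in> VH) \<and> (\<forall>(u, v)\<in>EF. (\<phi> u, \<phi> v) \<in> EH)"

end

theory Submission
  imports Defs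
begin

text \<open>Any two vertices of F_0 are joined by an arc and the target digraph has no loops, so a
  homomorphism is injective on the k_i out-neighbours of z_i. If z_i were mapped to a vertex v
  of F_0, these k_i images would all be out-neighbours of v in F_j, of which there are at most
  d^+(v) + 2 \<le> 2m/3 + 2 < k_i. The same count with in-neighbours handles w_i.
  Only condition (I) and the bounds 2m/3 + 2 < k_i \<le> m are needed.\<close>

lemma inj_on_if_pairwise_adjacent:
  assumes preserves: "\<And>u v. (u, v) \<in> EF \<Longrightarrow> (\<phi> u, \<phi> v) \<in> EH"
    and loopless: "\<And>x. (x, x) \<notin> EH"
    and adjacent: "\<And>u v. u \<in> S \<Longrightarrow> v \<in> S \<Longrightarrow> u \<noteq> v \<Longrightarrow> (u, v) \<in> EF \<or> (v, u) \<in> EF"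
  shows "inj_on \<phi> S"
proof (rule inj_onI, rule ccontr)
  fix u v assume "u \<in> S" "v \<in> S" "\<phi> u = \<phi> v" "u \<noteq> v"
  then have "(\<phi> u, \<phi> u) \<in> EH" using adjacent preserves by metis
  then show False using loopless by blast
qed

lemma card_le_if_inj_on_into_image_Un:
  assumes "inj_on f K" "f ` K \<subseteq> g ` N \<union> R" "finite N" "finite R"
  shows "card K \<le> card N + card R"
proof -
  have "card K = card (f ` K)" using assms(1) by (simp add: card_image)
  also have "\<dots> \<le> card (g ` N \<union> R)" using assms by (intro card_mono) auto
  also have "\<dots> \<le> card (g ` N) + card R" by (rule card_Un_le)
  also have "\<dots> \<le> card N + card R" using card_image_le[OF assms(3)] by simp
  finally show ?thesis .
qed

lemma Fdd_arcs_loopless: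
  assumes "is_tournament V E0"
  shows "(x, x) \<notin> Fdd_arcs E0 m k"
  using assms by (cases x) (auto simp: Fdd_arcs_def is_tournament_def)

lemma Fdd_arcs_out_Orig:
  "(Orig v, y) \<in> Fdd_arcs E0 m k \<Longrightarrow> y \<in> Orig ` {x. (v, x) \<in> E0} \<union> {Zr, Wr}"
  by (cases y) (auto simp: Fdd_arcs_def)

lemma Fdd_arcs_in_Orig:
  "(y, Orig v) \<in> Fdd_arcs E0 m k \<Longrightarrow> y \<in> Orig ` {x. (x, v) \<in> E0} \<union> {Zr, Wr}"
  by (cases y) (auto simp: Fdd_arcs_def)

lemma is_hom_Fdd_inj_on_Orig:
  assumes tour: "is_tournament {1..m} E0" and "k \<le> m"
    and hom: "is_hom V (Fdd_arcs E0 m k) V' (Fdd_arcs E0 m k') \<phi>"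
  shows "inj_on (\<lambda>u. \<phi> (Orig u)) {1..k}"
proof -
  have "inj_on \<phi> (Orig ` {1..k})"
  proof (rule inj_on_if_pairwise_adjacent)
    show "(\<phi> u, \<phi> v) \<in> Fdd_arcs E0 m k'" if "(u, v) \<in> Fdd_arcs E0 m k" for u v
      using hom that unfolding is_hom_def by blast
    show "(x, x) \<notin> Fdd_arcs E0 m k'" for x
      using tour by (rule Fdd_arcs_loopless)
    show "(x, y) \<in> Fdd_arcs E0 m k \<or> (y, x) \<in> Fdd_arcs E0 m k"
      if xy: "x \<in> Orig ` {1..k}" "y \<in> Orig ` {1..k}" "x \<noteq> y" for x y
    proof -
      obtain u v where uv: "x = Orig u" "y = Orig v" "u \<in> {1..k}" "v \<in> {1..k}"
        using xy(1,2) by blast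
      have "u \<in> {1..m}" "v \<in> {1..m}" "u \<noteq> v" using uv xy(3) \<open>k \<le> m\<close> by auto
      then have "(u, v) \<in> E0 \<or> (v, u) \<in> E0"
        using tour unfolding is_tournament_def by blast
      then show ?thesis using uv(1,2) by (auto simp: Fdd_arcs_def)
    qed
  qed
  then show ?thesis by (auto intro!: inj_onI dest: inj_onD)
qed

lemma is_tournament_finite_neighbours:
  assumes "is_tournament {1..m} E0"
  shows "finite {x. (v, x) \<in> E0}" "finite {x. (x, v) \<in> E0}"
proof -
  have "E0 \<subseteq> {1..m} \<times> {1..m}" using assms by (simp add: is_tournament_def)
  then have "{x. (v, x) \<in> E0} \<subseteq> {1..m}" "{x. (x, v) \<in> E0} \<subseteq> {1..m}" by auto
  then show "finite {x. (v, x) \<in> E0}" "finite {x. (x, v) \<in> E0}"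
    by (auto intro: finite_subset)
qed

lemma is_hom_Fdd_Zr_Orig_le_out_deg:
  assumes tour: "is_tournament {1..m} E0" and "k \<le> m"
    and hom: "is_hom V (Fdd_arcs E0 m k) V' (Fdd_arcs E0 m k') \<phi>"
    and root: "\<phi> Zr = Orig v"
  shows "k \<le> out_deg E0 v + 2"
proof -
  have "(\<lambda>u. \<phi> (Orig u)) ` {1..k} \<subseteq> Orig ` {x. (v, x) \<in> E0} \<union> {Zr, Wr}"
  proof (rule image_subsetI)
    fix u assume "u \<in> {1..k}"
    then have "(Zr, Orig u) \<in> Fdd_arcs E0 m k" by (simp add: Fdd_arcs_def)
    then have "(Orig v, \<phi> (Orig u)) \<in> Fdd_arcs E0 m k'"
      using hom root unfolding is_hom_def by fastforce
    then show "\<phi> (Orig u) \<in> Orig ` {x. (v, x) \<in> E0} \<union> {Zr, Wr}"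
      by (rule Fdd_arcs_out_Orig)
  qed
  from card_le_if_inj_on_into_image_Un[OF is_hom_Fdd_inj_on_Orig[OF assms(1-3)] this
      is_tournament_finite_neighbours(1)[OF tour]]
  show ?thesis by (simp add: out_deg_def)
qed

lemma is_hom_Fdd_Wr_Orig_le_in_deg:
  assumes tour: "is_tournament {1..m} E0" and "k \<le> m"
    and hom: "is_hom V (Fdd_arcs E0 m k) V' (Fdd_arcs E0 m k') \<phi>"
    and root: "\<phi> Wr = Orig v"
  shows "k \<le> in_deg E0 v + 2"
proof -
  have "(\<lambda>u. \<phi> (Orig u)) ` {1..k} \<subseteq> Orig ` {x. (x, v) \<in> E0} \<union> {Zr, Wr}"
  proof (rule image_subsetI)
    fix u assume "u \<in> {1..k}"
    then have "(Orig u, Wr) \<in> Fdd_arcs E0 m k" by (simp add: Fdd_arcs_def)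
    then have "(\<phi> (Orig u), Orig v) \<in> Fdd_arcs E0 m k'"
      using hom root unfolding is_hom_def by fastforce
    then show "\<phi> (Orig u) \<in> Orig ` {x. (x, v) \<in> E0} \<union> {Zr, Wr}"
      by (rule Fdd_arcs_in_Orig)
  qed
  from card_le_if_inj_on_into_image_Un[OF is_hom_Fdd_inj_on_Orig[OF assms(1-3)] this
      is_tournament_finite_neighbours(2)[OF tour]]
  show ?thesis by (simp add: in_deg_def)
qed

lemma is_hom_Fdd_root_not_Orig:
  assumes "is_hom (Fdd_verts m) EF (Fdd_verts m) EH \<phi>" and "r \<in> {Zr, Wr}"
    and "\<And>v. v \<in> {1..m} \<Longrightarrow> \<phi> r \<noteq> Orig v"
  shows "\<phi> r \<in> {Zr, Wr}"
proof -
  have "\<phi> r \<in> Orig ` {1..m} \<union> {Zr, Wr}"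
    using assms(1,2) by (auto simp: is_hom_def Fdd_verts_def)
  then show ?thesis using assms(3) by blast
qed

theorem claim4p4:
  fixes s m :: nat and E0 :: "(nat \<times> nat) set" and k :: "nat \<Rightarrow> nat"
    and i j :: nat and \<phi> :: "vtx \<Rightarrow> vtx"
  assumes s_pos: "s \<ge> 1" and m_pos: "m \<ge> 1"
    and tour: "is_tournament {1..m} E0"
    and degI: "\<forall>u\<in>{1..m}. real (out_deg E0 u) \<le> 2 * real m / 3 \<and> real (in_deg E0 u) \<le> 2 * real m / 3"
    and condII: "\<not> (\<exists>A1 A2. A1 \<subseteq> {1..m} \<and> A2 \<subseteq> {1..m} \<and> A1 \<inter> A2 = {} \<and>
                    card A1 = nat \<lceil>sqrt (real m)\<rceil> \<and> card A2 = nat \<lceil>sqrt (real m)\<rceil> \<and>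
                    (\<forall>a1\<in>A1. \<forall>a2\<in>A2. (a1, a2) \<in> E0))"
    and condIII: "\<forall>S. S \<subseteq> {1..m} \<and> real (card S) \<ge> 2 * real m / 13 - sqrt (real m)
                    \<longrightarrow> has_dicycle_in E0 S"
    and k_range: "\<forall>t\<in>{1..s}. 2 * real m / 3 + 2 < real (k t) \<and> real (k t) < 5 * real m / 6"
    and k_dec: "\<forall>t. 1 \<le> t \<and> t < s \<longrightarrow> k t > k (Suc t) + 1"
    and ij: "i \<in> {1..s}" "j \<in> {1..s}"
    and hom: "is_hom (Fdd_verts m) (Fdd_arcs E0 m (k i)) (Fdd_verts m) (Fdd_arcs E0 m (k j)) \<phi>"
  shows "\<phi> Zr \<in> {Zr, Wr} \<and> \<phi> Wr \<in> {Zr, Wr}"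
proof -
  have ki: "2 * real m / 3 + 2 < real (k i)" "real (k i) < 5 * real m / 6"
    using k_range ij(1) by auto
  then have "k i \<le> m" by linarith
  have "\<phi> Zr \<in> {Zr, Wr}"
  proof (rule is_hom_Fdd_root_not_Orig[OF hom])
    fix v assume "v \<in> {1..m}"
    then have "real (out_deg E0 v) \<le> 2 * real m / 3" using degI by blast
    then have "\<not> k i \<le> out_deg E0 v + 2" using ki(1) by linarith
    then show "\<phi> Zr \<noteq> Orig v"
      using is_hom_Fdd_Zr_Orig_le_out_deg[OF tour \<open>k i \<le> m\<close> hom] by blast
  qed simp
  moreover have "\<phi> Wr \<in> {Zr, Wr}"
  proof (rule is_hom_Fdd_root_not_Orig[OF hom])
    fix v assume "v \<in> {1..m}"
    then have "real (in_deg E0 v) \<le> 2 * real m / 3" using degI by blast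
    then have "\<not> k i \<le> in_deg E0 v + 2" using ki(1) by linarith
    then show "\<phi> Wr \<noteq> Orig v"
      using is_hom_Fdd_Wr_Orig_le_in_deg[OF tour \<open>k i \<le> m\<close> hom] by blast
  qed simp
  ultimately show ?thesis ..
qed

end
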